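(* For every finite set $J$, the signatures $\mathrm{Even}_J$, $\mathrm{Odd}_J$ and $\mathrm{NAE}_J$ are windable.
   Context: $\mathrm{Even}_J,\mathrm{Odd}_J,\mathrm{NAE}_J:\{0,1\}^J\to\{0,1\}$: $\mathrm{Even}_J(x)=1$ iff $\sum_ix_i$ is even; $\mathrm{Odd}_J(x)=1$ iff $\sum_ix_i$ is odd; $\mathrm{NAE}_J(x)=1$ iff $1\le\sum_ix_i\le|J|-1$. For $x,y\in\{0,1\}^J$, $x\oplus y$ is coordinatewise addition mod 2, and $\mathbf S$ is the characteristic vector of $S\subseteq J$. For $z\in\{0,1\}^J$, $\mathrm{Match}'(z)$ is the set of partitions of $\{i:z_i=1\}$ into blocks of size 1 or 2. $F:\{0,1\}^J\to\mathbb{Q}_{\ge0}$ is windable if there exist $B(x,y,M)\ge0$ for all $x,y\in\{0,1\}^J$ and $M\in\mathrm{Match}'(x\oplus y)$ with (1) $F(x)F(y)=\sum_{M\in\mathrm{Match}'(x\oplus y)}B(x,y,M)$ for all $x,y$, and (2) $B(x,y,M)=B(x\oplus\mathbf S,y\oplus\mathbf S,M)$ for all $x,y$ and all $S\in M\in\mathrm{Match}'(x\oplus y)$. *)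

theory Defs
  imports Complex_Main "HOL-Library.Disjoint_Sets"
begin

(* Vectors x in {0,1}^J are represented by their supports X = {i. x_i = 1}, X \<subseteq> J.
   Coordinatewise addition mod 2 becomes symmetric difference, and the
   characteristic vector of S is S itself. *)

definition xorv :: "'a set \<Rightarrow> 'a set \<Rightarrow> 'a set" where
  "xorv X Y = (X - Y) \<union> (Y - X)"

definition vecs :: "'a set \<Rightarrow> 'a set set" where
  "vecs J = Pow J"

definition Even_sig :: "'a set \<Rightarrow> 'a set \<Rightarrow> rat" where
  "Even_sig J X = (if even (card X) then 1 else 0)"

definition Odd_sig :: "'a set \<Rightarrow> 'a set \<Rightarrow> rat" where
  "Odd_sig J X = (if odd (card X) then 1 else 0)"

definition NAE_sig :: "'a set \<Rightarrow> 'a set \<Rightarrow> rat" where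
  "NAE_sig J X = (if 1 \<le> card X \<and> card X \<le> card J - 1 then 1 else 0)"

definition Match' :: "'a set \<Rightarrow> 'a set set set" where
  "Match' Z = {M. partition_on Z M \<and> (\<forall>S\<in>M. card S = 1 \<or> card S = 2)}"

definition windable :: "'a set \<Rightarrow> ('a set \<Rightarrow> rat) \<Rightarrow> bool" where
  "windable J F \<longleftrightarrow>
     (\<exists>B :: 'a set \<Rightarrow> 'a set \<Rightarrow> 'a set set \<Rightarrow> rat.
        (\<forall>X\<in>vecs J. \<forall>Y\<in>vecs J. \<forall>M\<in>Match' (xorv X Y). B X Y M \<ge> 0)
      \<and> (\<forall>X\<in>vecs J. \<forall>Y\<in>vecs J. F X * F Y = (\<Sum>M\<in>Match' (xorv X Y). B X Y M))
      \<and> (\<forall>X\<in>vecs J. \<forall>Y\<in>vecs J. \<forall>M\<in>Match' (xorv X Y). \<forall>S\<in>M.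
            B X Y M = B (xorv X S) (xorv Y S) M))"

end

theory Submission
  imports Defs
begin

text \<open>
  For \<open>Even\<close> and \<open>Odd\<close>, spread \<open>F X * F Y\<close> uniformly over the perfect matchings of
  \<open>Z = X \<oplus> Y\<close>: they exist because \<open>X\<close> and \<open>Y\<close> have the same parity, and flipping a
  pair of coordinates preserves parity.

  For \<open>NAE\<close>, \<open>X\<close> and \<open>Y\<close> agree outside \<open>Z\<close>, and flips by blocks of a matching
  of \<open>Z\<close> never touch \<open>J - Z\<close>. If \<open>X\<close> is non-constant on \<open>J - Z\<close>, both values are 1 and
  all weight goes to the matching of singletons. Otherwise \<open>NAE X * NAE Y = 1\<close> iff \<open>X\<close> is
  non-constant on \<open>Z\<close>. Then the weight goes to the matchings whose pairs cover a set \<open>V\<close>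
  with \<open>|X \<inter> V|\<close> odd: flipping a block changes \<open>X \<inter> V\<close> by two points or not at all.
  Each even \<open>V \<subseteq> Z\<close> meeting \<open>X\<close> oddly gets \<open>4 / 2^|Z|\<close>, shared by the matchings with
  pair set \<open>V\<close>, and there are exactly \<open>2^(|Z|-2)\<close> such \<open>V\<close> when \<open>X\<close> splits \<open>Z\<close>.
\<close>

lemma finite_xorv: "finite X \<Longrightarrow> finite Y \<Longrightarrow> finite (xorv X Y)"
  by (simp add: xorv_def)

lemma xorv_xorv_cancel: "xorv (xorv X S) (xorv Y S) = xorv X Y"
  by (auto simp: xorv_def)

lemma xorv_involutive: "xorv (xorv X S) S = X"
  by (auto simp: xorv_def)

lemma card_xorv:
  assumes "finite X" "finite S"
  shows "card (xorv X S) + 2 * card (X \<inter> S) = card X + card S"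
proof -
  have "card (xorv X S) = card (X - S) + card (S - X)"
    unfolding xorv_def using assms by (intro card_Un_disjoint) auto
  moreover have "card X = card (X \<inter> S) + card (X - S)" "card S = card (X \<inter> S) + card (S - X)"
    using card_Int_Diff[of X S] card_Int_Diff[of S X] assms by (simp_all add: Int_commute)
  ultimately show ?thesis by simp
qed

lemma even_card_xorv_iff:
  assumes "finite X" "finite S"
  shows "even (card (xorv X S)) \<longleftrightarrow> (even (card X) \<longleftrightarrow> even (card S))"
proof -
  have "even (card (xorv X S) + 2 * card (X \<inter> S)) \<longleftrightarrow> even (card X + card S)"
    by (simp only: card_xorv[OF assms])
  then show ?thesis by simp
qed

lemma partition_on_Un:
  assumes P: "partition_on A P" and Q: "partition_on B Q" and "A \<inter> B = {}"
  shows "partition_on (A \<union> B) (P \<union> Q)"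
proof (rule partition_onI)
  have "disjnt p q" "disjnt q p" if "p \<in> P" "q \<in> Q" for p q
    using that partition_onD1[OF P] partition_onD1[OF Q] \<open>A \<inter> B = {}\<close> by (auto simp: disjnt_def)
  with partition_onD2[OF P] partition_onD2[OF Q]
  show "disjnt p q" if "p \<in> P \<union> Q" "q \<in> P \<union> Q" "p \<noteq> q" for p q
    using that unfolding disjoint_def disjnt_def by blast
qed (use partition_onD1[OF P] partition_onD1[OF Q] partition_onD3[OF P] partition_onD3[OF Q] in auto)

lemma ex_partition_on_doubletons:
  assumes "finite V" "even (card V)"
  shows "\<exists>P. partition_on V P \<and> (\<forall>S\<in>P. card S = 2)"
  using assms
proof (induction "card V" arbitrary: V rule: less_induct)
  case less
  show ?case
  proof (cases "V = {}")
    case True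
    then show ?thesis by (auto simp: partition_on_empty)
  next
    case False
    with less.prems have "card V \<ge> 2"
      by (metis One_nat_def Suc_1 bot_nat_0.extremum_unique card_0_eq nle_le not_less_eq_eq odd_one)
    obtain a where a: "a \<in> V" using False by blast
    with \<open>card V \<ge> 2\<close> less.prems(1) have "card (V - {a}) \<noteq> 0" by simp
    then obtain b where b: "b \<in> V - {a}" by (metis card.empty ex_in_conv)
    let ?W = "V - {a, b}"
    have "card ?W = card V - 2"
      using a b less.prems(1) by (auto simp: card_Diff_subset)
    with \<open>card V \<ge> 2\<close> less.prems have "card ?W < card V" "even (card ?W)" by auto
    with less.hyps less.prems(1) obtain P where P: "partition_on ?W P" "\<forall>S\<in>P. card S = 2"
      by blast
    have "disjnt {a, b} (\<Union>P)"
      using partition_onD1[OF P(1)] by (auto simp: disjnt_def)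
    then have "partition_on V (insert {a, b} P)"
      using P(1) a b by (simp add: partition_on_insert)
    with P(2) b show ?thesis by (intro exI[of _ "insert {a, b} P"]) auto
  qed
qed

lemma card_half_by_involution:
  assumes "finite U" and maps_to: "\<And>u. u \<in> U \<Longrightarrow> f u \<in> U"
    and involutive: "\<And>u. u \<in> U \<Longrightarrow> f (f u) = u"
    and swaps: "\<And>u. u \<in> U \<Longrightarrow> P (f u) \<longleftrightarrow> \<not> P u"
  shows "2 * card {u\<in>U. P u} = card U"
proof -
  have "bij_betw f {u\<in>U. P u} {u\<in>U. \<not> P u}"
    by (rule bij_betw_byWitness[where f' = f]) (use maps_to involutive swaps in auto)
  then have "card {u\<in>U. P u} = card {u\<in>U. \<not> P u}"
    by (rule bij_betw_same_card)
  moreover have "U = {u\<in>U. P u} \<union> {u\<in>U. \<not> P u}"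
    by blast
  then have "card U = card {u\<in>U. P u} + card {u\<in>U. \<not> P u}"
    using \<open>finite U\<close> by (metis (no_types, lifting) card_Un_disjoint disjoint_iff finite_Un mem_Collect_eq)
  ultimately show ?thesis by simp
qed

lemma card_odd_subsets:
  assumes "finite S" "S \<noteq> {}"
  shows "2 * card {A. A \<subseteq> S \<and> odd (card A)} = 2 ^ card S"
proof -
  obtain a where "a \<in> S" using assms(2) by blast
  have "2 * card {A \<in> Pow S. odd (card A)} = card (Pow S)"
  proof (rule card_half_by_involution)
    fix A assume "A \<in> Pow S"
    with assms(1) have "finite A" by (auto intro: finite_subset)
    show "xorv A {a} \<in> Pow S"
      using \<open>A \<in> Pow S\<close> \<open>a \<in> S\<close> by (auto simp: xorv_def)
    show "xorv (xorv A {a}) {a} = A"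
      by (rule xorv_involutive)
    show "odd (card (xorv A {a})) \<longleftrightarrow> \<not> odd (card A)"
      using even_card_xorv_iff[OF \<open>finite A\<close>, of "{a}"] by simp
  qed (use assms(1) in simp)
  with assms(1) show ?thesis
    by (simp add: card_Pow)
qed

lemma card_subsets_odd_on_both_sides:
  assumes "finite Z" "X \<inter> Z \<noteq> {}" "Z - X \<noteq> {}"
  shows "4 * card {V. V \<subseteq> Z \<and> odd (card (X \<inter> V)) \<and> odd (card (V - X))} = 2 ^ card Z"
proof -
  let ?W = "{V. V \<subseteq> Z \<and> odd (card (X \<inter> V)) \<and> odd (card (V - X))}"
  let ?odd = "\<lambda>T. {A. A \<subseteq> T \<and> odd (card A)}"
  have split_Un: "X \<inter> (A \<union> B) = A" "A \<union> B - X = B" if "A \<subseteq> X" "B \<subseteq> Z - X" for A B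
    using that by blast+
  have "bij_betw (\<lambda>V. (X \<inter> V, V - X)) ?W (?odd (X \<inter> Z) \<times> ?odd (Z - X))"
    by (rule bij_betw_byWitness[where f' = "\<lambda>(A, B). A \<union> B"]) (auto simp: split_Un)
  then have "4 * card ?W = (2 * card (?odd (X \<inter> Z))) * (2 * card (?odd (Z - X)))"
    by (simp add: bij_betw_same_card card_cartesian_product)
  also have "\<dots> = 2 ^ card (X \<inter> Z) * 2 ^ card (Z - X)"
    using card_odd_subsets[of "X \<inter> Z"] card_odd_subsets[of "Z - X"] assms by simp
  also have "\<dots> = 2 ^ card Z"
    using card_Int_Diff[OF assms(1), of X] by (simp add: Int_commute power_add)
  finally show ?thesis .
qed

lemma sum_divide_card_fibres:
  fixes g :: "'b \<Rightarrow> 'c::field_char_0"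
  assumes "finite A"
  shows "(\<Sum>a\<in>A. g (f a) / of_nat (card {x\<in>A. f x = f a})) = (\<Sum>b\<in>f ` A. g b)"
proof -
  have "(\<Sum>a\<in>A. g (f a) / of_nat (card {x\<in>A. f x = f a}))
      = (\<Sum>b\<in>f ` A. \<Sum>a\<in>{x\<in>A. f x = b}. g (f a) / of_nat (card {x\<in>A. f x = f a}))"
    by (rule sum.image_gen[OF assms])
  also have "\<dots> = (\<Sum>b\<in>f ` A. g b)"
  proof (rule sum.cong[OF refl])
    fix b assume "b \<in> f ` A"
    with assms have "card {x\<in>A. f x = b} \<noteq> 0" by auto
    then show "(\<Sum>a\<in>{x\<in>A. f x = b}. g (f a) / of_nat (card {x\<in>A. f x = f a})) = g b"
      by simp
  qed
  finally show ?thesis .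
qed

lemma finite_Match': "finite Z \<Longrightarrow> finite (Match' Z)"
  by (rule finite_subset[OF _ finitely_many_partition_on[of Z]]) (auto simp: Match'_def)

lemma Match'_singletons: "(\<lambda>i. {i}) ` Z \<in> Match' Z"
  by (auto simp: Match'_def partition_on_singletons)

lemma Match'_block_subset: "M \<in> Match' Z \<Longrightarrow> S \<in> M \<Longrightarrow> S \<subseteq> Z"
  by (auto simp: Match'_def partition_on_def)

definition perfect_Match' :: "'a set \<Rightarrow> 'a set set set" where
  "perfect_Match' Z = {M \<in> Match' Z. \<forall>S\<in>M. card S = 2}"

lemma card_perfect_Match'_pos:
  assumes "finite Z" "even (card Z)"
  shows "card (perfect_Match' Z) > 0"
proof -
  obtain P where "partition_on Z P" "\<forall>S\<in>P. card S = 2"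
    using ex_partition_on_doubletons[OF assms] by blast
  then have "P \<in> perfect_Match' Z"
    by (auto simp: perfect_Match'_def Match'_def)
  moreover have "finite (perfect_Match' Z)"
    using finite_Match'[OF assms(1)] by (simp add: perfect_Match'_def)
  ultimately show ?thesis
    by (auto simp: card_gt_0_iff)
qed

lemma windable_parity_indicator:
  assumes "finite J"
  shows "windable J (\<lambda>X. if even (card X + k) then 1 else 0)"
proof -
  define F where "F X = (if even (card X + k) then 1 else (0::rat))" for X :: "'a set"
  define B where "B X Y M = F X * F Y *
      (if \<forall>S\<in>M. card S = 2 then 1 / of_nat (card (perfect_Match' (xorv X Y))) else 0)"
    for X Y :: "'a set" and M :: "'a set set"
  have fin: "finite X" if "X \<in> vecs J" for X
    using assms that by (auto simp: vecs_def intro: finite_subset)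
  have sum_B: "F X * F Y = (\<Sum>M\<in>Match' (xorv X Y). B X Y M)" if "X \<in> vecs J" "Y \<in> vecs J" for X Y
  proof (cases "F X * F Y = 0")
    case False
    let ?Z = "xorv X Y"
    have fin_Z: "finite ?Z" using fin that by (simp add: finite_xorv)
    from False have "even (card X + k)" "even (card Y + k)"
      by (auto simp: F_def split: if_splits)
    then have "even (card ?Z)"
      using even_card_xorv_iff[OF fin fin, OF that] by auto
    then have "card (perfect_Match' ?Z) > 0"
      by (rule card_perfect_Match'_pos[OF fin_Z])
    moreover have "(\<Sum>M\<in>Match' ?Z. B X Y M)
        = F X * F Y * (of_nat (card (perfect_Match' ?Z)) / of_nat (card (perfect_Match' ?Z)))"
      using finite_Match'[OF fin_Z]
      by (simp add: B_def perfect_Match'_def sum.inter_filter[symmetric] sum_distrib_left[symmetric])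
    ultimately show ?thesis by simp
  next
    case True
    show ?thesis
      unfolding B_def True by simp
  qed
  have B_invariant: "B X Y M = B (xorv X S) (xorv Y S) M"
    if "X \<in> vecs J" "Y \<in> vecs J" "S \<in> M" for X Y M S
  proof (cases "\<forall>S\<in>M. card S = 2")
    case True
    with \<open>S \<in> M\<close> have "finite S" "card S = 2" by (auto intro: card_ge_0_finite)
    then have "F (xorv X S) = F X" "F (xorv Y S) = F Y"
      using even_card_xorv_iff[OF fin[OF that(1)]] even_card_xorv_iff[OF fin[OF that(2)]]
      by (simp_all add: F_def)
    then show ?thesis
      by (simp add: B_def xorv_xorv_cancel)
  next
    case False
    then have not_perfect: "(\<forall>S\<in>M. card S = 2) \<longleftrightarrow> False" by blast
    show ?thesis
      unfolding B_def not_perfect by simp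
  qed
  have "windable J F"
    unfolding windable_def
  proof (intro exI[of _ B] conjI ballI)
    show "B X Y M \<ge> 0" for X Y M
      by (simp add: B_def F_def)
    show "F X * F Y = (\<Sum>M\<in>Match' (xorv X Y). B X Y M)" if "X \<in> vecs J" "Y \<in> vecs J" for X Y
      using that by (rule sum_B)
    show "B X Y M = B (xorv X S) (xorv Y S) M"
      if "X \<in> vecs J" "Y \<in> vecs J" "M \<in> Match' (xorv X Y)" "S \<in> M" for X Y M S
      using that(1,2,4) by (rule B_invariant)
  qed
  then show ?thesis
    by (simp add: F_def[abs_def])
qed

definition paired_part :: "'a set set \<Rightarrow> 'a set" where
  "paired_part M = \<Union>{S\<in>M. card S = 2}"

lemma paired_part_subset: "M \<in> Match' Z \<Longrightarrow> paired_part M \<subseteq> Z"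
  by (auto simp: paired_part_def Match'_def partition_on_def)

lemma even_card_paired_part:
  assumes "M \<in> Match' Z"
  shows "even (card (paired_part M))"
proof -
  let ?C = "{S\<in>M. card S = 2}"
  have "pairwise disjnt ?C"
    using assms by (auto simp: Match'_def partition_on_def intro: pairwise_subset)
  then have "card (paired_part M) = (\<Sum>S\<in>?C. card S)"
    unfolding paired_part_def by (rule card_Union_disjoint) (auto intro: card_ge_0_finite)
  also have "\<dots> = 2 * card ?C"
    by simp
  finally show ?thesis by simp
qed

lemma paired_part_image:
  assumes "finite Z"
  shows "paired_part ` Match' Z = {V. V \<subseteq> Z \<and> even (card V)}"
proof (intro equalityI subsetI)
  show "V \<in> {V. V \<subseteq> Z \<and> even (card V)}" if "V \<in> paired_part ` Match' Z" for V
    using that paired_part_subset even_card_paired_part by blast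
next
  fix V assume "V \<in> {V. V \<subseteq> Z \<and> even (card V)}"
  then have V: "V \<subseteq> Z" "even (card V)" by auto
  with assms obtain P where P: "partition_on V P" "\<forall>S\<in>P. card S = 2"
    using ex_partition_on_doubletons finite_subset by metis
  let ?M = "P \<union> (\<lambda>i. {i}) ` (Z - V)"
  have "partition_on (V \<union> (Z - V)) ?M"
    using P(1) partition_on_singletons by (rule partition_on_Un) auto
  with V(1) P(2) have "?M \<in> Match' Z"
    by (auto simp: Match'_def Un_absorb1)
  moreover have "{S \<in> ?M. card S = 2} = P"
    using P(2) by auto
  then have "paired_part ?M = V"
    using partition_onD1[OF P(1)] by (simp add: paired_part_def)
  ultimately show "V \<in> paired_part ` Match' Z" by blast
qed

lemma even_card_xorv_inter_paired_part:
  assumes "finite Z" "M \<in> Match' Z" "S \<in> M"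
  shows "even (card (xorv X S \<inter> paired_part M)) \<longleftrightarrow> even (card (X \<inter> paired_part M))"
proof (cases "card S = 2")
  case True
  have "finite (paired_part M)"
    using paired_part_subset[OF assms(2)] assms(1) by (rule finite_subset)
  moreover from True assms(3) have "S \<subseteq> paired_part M" "finite S"
    by (auto simp: paired_part_def intro: card_ge_0_finite)
  then have "xorv X S \<inter> paired_part M = xorv (X \<inter> paired_part M) S"
    by (auto simp: xorv_def)
  ultimately show ?thesis
    using True even_card_xorv_iff[of "X \<inter> paired_part M" S] \<open>finite S\<close> by simp
next
  case False
  from assms(2) have "disjoint M"
    by (simp add: Match'_def partition_on_def)
  with False assms(3) have "S \<inter> paired_part M = {}"
    by (auto simp: paired_part_def dest: disjointD)
  then have "xorv X S \<inter> paired_part M = X \<inter> paired_part M"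
    by (auto simp: xorv_def)
  then show ?thesis by simp
qed

definition splits :: "'a set \<Rightarrow> 'a set \<Rightarrow> bool" where
  "splits X A \<longleftrightarrow> X \<inter> A \<noteq> {} \<and> A - X \<noteq> {}"

lemma splits_mono: "splits X A \<Longrightarrow> A \<subseteq> B \<Longrightarrow> splits X B"
  by (auto simp: splits_def)

lemma splits_cong: "A \<inter> X = A \<inter> Y \<Longrightarrow> splits X A \<longleftrightarrow> splits Y A"
  by (auto simp: splits_def)

lemma splits_xorv_iff:
  assumes "X \<subseteq> J" "Y \<subseteq> J" "\<not> splits X (J - xorv X Y)"
  shows "splits X J \<and> splits Y J \<longleftrightarrow> splits X (xorv X Y)"
  using assms by (auto simp: splits_def xorv_def)

lemma NAE_sig_eq:
  assumes "finite J" "X \<subseteq> J"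
  shows "NAE_sig J X = (if splits X J then 1 else 0)"
proof -
  have "card X \<ge> 1 \<longleftrightarrow> X \<noteq> {}"
    using assms by (auto simp: Suc_le_eq card_gt_0_iff intro: finite_subset)
  moreover have "card X < card J \<longleftrightarrow> X \<noteq> J"
    using assms card_mono[OF assms] card_subset_eq[OF assms(1,2)] by fastforce
  ultimately show ?thesis
    using assms by (auto simp: NAE_sig_def splits_def)
qed

definition odd_split_weight :: "'a set \<Rightarrow> 'a set \<Rightarrow> 'a set set \<Rightarrow> rat" where
  "odd_split_weight Z X M =
     (if odd (card (X \<inter> paired_part M)) then 4 / 2 ^ card Z else 0)
     / of_nat (card {M' \<in> Match' Z. paired_part M' = paired_part M})"

lemma sum_odd_split_weight:
  assumes "finite Z"
  shows "(\<Sum>M\<in>Match' Z. odd_split_weight Z X M) = (if splits X Z then 1 else 0)"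
proof -
  let ?W = "{V. V \<subseteq> Z \<and> odd (card (X \<inter> V)) \<and> odd (card (V - X))}"
  have "(\<Sum>M\<in>Match' Z. odd_split_weight Z X M)
      = (\<Sum>V | V \<subseteq> Z \<and> even (card V). if odd (card (X \<inter> V)) then 4 / 2 ^ card Z else 0)"
    using sum_divide_card_fibres[OF finite_Match'[OF assms], of
        "\<lambda>V. if odd (card (X \<inter> V)) then 4 / 2 ^ card Z else 0" paired_part]
    by (simp add: odd_split_weight_def paired_part_image[OF assms])
  also have "{V. V \<subseteq> Z \<and> even (card V) \<and> odd (card (X \<inter> V))} = ?W"
  proof -
    have "card V = card (X \<inter> V) + card (V - X)" if "V \<subseteq> Z" for V
      using card_Int_Diff[of V X] finite_subset[OF that assms] by (simp add: Int_commute)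
    then show ?thesis by auto
  qed
  then have "(\<Sum>V | V \<subseteq> Z \<and> even (card V). if odd (card (X \<inter> V)) then 4 / 2 ^ card Z else 0)
      = of_nat (card ?W) * (4 / 2 ^ card Z :: rat)"
    using assms by (simp add: sum.inter_filter[symmetric] conj_assoc)
  also have "\<dots> = (if splits X Z then 1 else 0)"
  proof (cases "splits X Z")
    case True
    then have "of_nat (4 * card ?W) = (2 ^ card Z :: rat)"
      using card_subsets_odd_on_both_sides[OF assms] by (simp add: splits_def)
    with True show ?thesis by simp
  next
    case False
    then have "X \<inter> V = {} \<or> V - X = {}" if "V \<subseteq> Z" for V
      using that by (auto simp: splits_def)
    then have W_empty: "?W = {}"
      by (metis (no_types, lifting) card.empty empty_Collect_eq even_zero)
    show ?thesis
      unfolding W_empty using False by simp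
  qed
  finally show ?thesis .
qed

lemma windable_NAE_sig:
  assumes "finite J"
  shows "windable J (NAE_sig J)"
proof -
  define B where "B X Y M =
      (if splits X (J - xorv X Y) then (if M = (\<lambda>i. {i}) ` xorv X Y then 1 else 0)
       else odd_split_weight (xorv X Y) X M)" for X Y :: "'a set" and M :: "'a set set"
  have sub: "X \<subseteq> J" and fin: "finite X" if "X \<in> vecs J" for X
    using assms that by (auto simp: vecs_def intro: finite_subset)
  have sum_B: "NAE_sig J X * NAE_sig J Y = (\<Sum>M\<in>Match' (xorv X Y). B X Y M)"
    if "X \<in> vecs J" "Y \<in> vecs J" for X Y
  proof (cases "splits X (J - xorv X Y)")
    case True
    have "J - xorv X Y \<subseteq> J" "(J - xorv X Y) \<inter> X = (J - xorv X Y) \<inter> Y"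
      by (auto simp: xorv_def)
    with True have "splits X J" "splits Y J"
      using splits_mono splits_cong by blast+
    then have "NAE_sig J X * NAE_sig J Y = 1"
      using NAE_sig_eq[OF assms sub] that by simp
    moreover have "(\<Sum>M\<in>Match' (xorv X Y). B X Y M) = 1"
      using True Match'_singletons finite_Match'[OF finite_xorv[OF fin fin]] that
      by (simp add: B_def)
    ultimately show ?thesis by simp
  next
    case False
    then have "(\<Sum>M\<in>Match' (xorv X Y). B X Y M) = (if splits X (xorv X Y) then 1 else 0)"
      using sum_odd_split_weight[OF finite_xorv[OF fin fin]] that by (simp add: B_def)
    moreover have "splits X J \<and> splits Y J \<longleftrightarrow> splits X (xorv X Y)"
      using that by (rule splits_xorv_iff[OF sub sub False])
    ultimately show ?thesis
      using NAE_sig_eq[OF assms sub] that by auto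
  qed
  have B_invariant: "B X Y M = B (xorv X S) (xorv Y S) M"
    if "X \<in> vecs J" "Y \<in> vecs J" "M \<in> Match' (xorv X Y)" "S \<in> M" for X Y M S
  proof -
    have "S \<subseteq> xorv X Y"
      using that(3,4) by (rule Match'_block_subset)
    then have "splits (xorv X S) (J - xorv X Y) \<longleftrightarrow> splits X (J - xorv X Y)"
      by (intro splits_cong) (auto simp: xorv_def)
    moreover have "odd (card (xorv X S \<inter> paired_part M)) \<longleftrightarrow> odd (card (X \<inter> paired_part M))"
      using even_card_xorv_inter_paired_part[OF finite_xorv[OF fin fin] that(3,4)] that by simp
    ultimately show ?thesis
      by (simp add: B_def odd_split_weight_def xorv_xorv_cancel)
  qed
  show ?thesis
    unfolding windable_def
  proof (intro exI[of _ B] conjI ballI)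
    show "B X Y M \<ge> 0" for X Y M
      by (simp add: B_def odd_split_weight_def)
    show "NAE_sig J X * NAE_sig J Y = (\<Sum>M\<in>Match' (xorv X Y). B X Y M)"
      if "X \<in> vecs J" "Y \<in> vecs J" for X Y
      using that by (rule sum_B)
    show "B X Y M = B (xorv X S) (xorv Y S) M"
      if "X \<in> vecs J" "Y \<in> vecs J" "M \<in> Match' (xorv X Y)" "S \<in> M" for X Y M S
      using that by (rule B_invariant)
  qed
qed

theorem lemma10:
  fixes J :: "'a set"
  assumes "finite J"
  shows "windable J (Even_sig J) \<and> windable J (Odd_sig J) \<and> windable J (NAE_sig J)"
proof (intro conjI)
  have "Even_sig J = (\<lambda>X. if even (card X + 0) then 1 else 0)"
    by (simp add: Even_sig_def[abs_def])
  then show "windable J (Even_sig J)"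
    using windable_parity_indicator[OF assms] by metis
  have "Odd_sig J = (\<lambda>X. if even (card X + 1) then 1 else 0)"
    by (simp add: Odd_sig_def[abs_def])
  then show "windable J (Odd_sig J)"
    using windable_parity_indicator[OF assms] by metis
  show "windable J (NAE_sig J)"
    using assms by (rule windable_NAE_sig)
qed

end
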